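(* Let $\varphi^{(1)},\varphi^{(2)},\varphi^{(3)},\dots$ be independent commuting variables, put $\varphi^{(-1)}=1$, $\varphi^{(0)}=0$, and let $$\varphi(\lambda)=\frac1\lambda+\sum_{k\ge1}\varphi^{(k)}\lambda^k,\qquad \varphi_\lambda=\frac{d\varphi}{d\lambda}=-\frac1{\lambda^2}+\sum_{k\ge1}k\varphi^{(k)}\lambda^{k-1}.$$ For $n\in\mathbb Z$ let $f_n=\mathfrak P_\varphi(\lambda^n\varphi_\lambda)$ (notation in the context), and let $S^{(n)}=\partial_{f_{1-n}}$. Then for all $n,m\in\mathbb Z$, $$[S^{(n)},S^{(m)}]=(m-n)\,S^{(n+m)},$$ i.e. the $S^{(n)}$, $n\in\mathbb Z$, span a Lie algebra with the commutation relations of the Witt algebra.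
   Context: All series have coefficients in the polynomial ring $R=\mathbb R[\varphi^{(1)},\varphi^{(2)},\dots]$. Let $w(\lambda)=1/\varphi(\lambda)=\lambda+O(\lambda^3)$, a power series in $\lambda$ without constant term. Every formal Laurent series $F$ in $\lambda$ with finitely many negative powers and coefficients in $R$ can be written uniquely as $F=\sum_{k\le m}c_k\,\varphi(\lambda)^k$ with $c_k\in R$ independent of $\lambda$ (i.e. as a Laurent series in $w$); write $[\varphi^k]F=c_k$, $P_\varphi F=\sum_{k=0}^{m}c_k\varphi(\lambda)^k$ and $\mathfrak P_\varphi F=F-P_\varphi F$. Then $\mathfrak P_\varphi F$ is a power series in $\lambda$ with no constant term (lowest order $\ge1$); in particular $f_n=\lambda^n\varphi_\lambda$ for $n\ge3$. For a formal series $f=\sum_{i\ge1}f^{(i)}\lambda^i$ with $f^{(i)}\in R$, $\partial_f$ denotes the derivation $\sum_{i\ge1}f^{(i)}\,\partial/\partial\varphi^{(i)}$ of $R$ (it acts on series coefficientwise). (In the paper, $\varphi^{(1)}=-y$, $\varphi^{(2)}=-x$, $\varphi^{(3)}=-z-y^2/2$ and $\varphi^{(k)}$, $k\ge4$, are nonlocal variables of a covering of the Gibbons–Tsarev equation, and the $S^{(n)}$ are the corresponding nonlocal symmetries written in these coordinates.) *)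

theory Defs
  imports "HOL-Library.Poly_Mapping" "HOL-Computational_Algebra.Formal_Laurent_Series"
begin

text \<open>The coefficient ring R = real[phi1, phi2, ...]: polynomials in countably many
  commuting variables, represented as finitely supported maps from monomials
  (finitely supported exponent vectors nat =>0 nat) to real coefficients.
  The variable with index 0 is not part of R; the carrier predicate in_R excludes it.\<close>

type_synonym R = "(nat \<Rightarrow>\<^sub>0 nat) \<Rightarrow>\<^sub>0 real"

definition var :: "nat \<Rightarrow> R" where
  "var k = Poly_Mapping.single (Poly_Mapping.single k 1) 1"

definition in_R :: "R \<Rightarrow> bool" where
  "in_R p \<longleftrightarrow> (\<forall>m \<in> Poly_Mapping.keys p. Poly_Mapping.lookup m 0 = 0)"

definition pd :: "nat \<Rightarrow> R \<Rightarrow> R" where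
  "pd i p = (\<Sum>m\<in>Poly_Mapping.keys p.
      Poly_Mapping.single (m - Poly_Mapping.single i 1) (Poly_Mapping.lookup p m * real (Poly_Mapping.lookup m i)))"

definition phi :: "R fls" where
  "phi = fls_X_inv + fps_to_fls (Abs_fps (\<lambda>k. if k = 0 then 0 else var k))"

definition phi_lam :: "R fls" where
  "phi_lam = fls_deriv phi"

definition wser :: "R fls" where
  "wser = (THE w. w * phi = 1)"

definition phipow :: "int \<Rightarrow> R fls" where
  "phipow k = (if 0 \<le> k then phi ^ nat k else wser ^ nat (- k))"

text \<open>F = sum_{k<=M} c_k phi^k (coefficientwise; terms with k < -j do not
  contribute to the coefficient of lambda^j since phi^k = w^(-k) has order -k).\<close>
definition is_phi_expansion :: "R fls \<Rightarrow> (int \<Rightarrow> R) \<Rightarrow> bool" where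
  "is_phi_expansion F c \<longleftrightarrow>
     (\<exists>M. (\<forall>k>M. c k = 0) \<and>
          (\<forall>j. fls_nth F j = (\<Sum>k\<in>{-j..M}. c k * fls_nth (phipow k) j)))"

definition phi_coeff :: "R fls \<Rightarrow> int \<Rightarrow> R" where
  "phi_coeff F = (THE c. is_phi_expansion F c)"

definition P_phi :: "R fls \<Rightarrow> R fls" where
  "P_phi F = (\<Sum>k\<in>{k. 0 \<le> k \<and> phi_coeff F k \<noteq> 0}. fls_const (phi_coeff F k) * phipow k)"

definition frakP_phi :: "R fls \<Rightarrow> R fls" where
  "frakP_phi F = F - P_phi F"

definition f_ser :: "int \<Rightarrow> R fls" where
  "f_ser n = frakP_phi (fls_X_intpow n * phi_lam)"

text \<open>The derivation partial_f = sum_{i>=1} f^(i) d/d phi^(i); on a polynomial only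
  the finitely many variables occurring in it contribute.\<close>
definition der :: "R fls \<Rightarrow> R \<Rightarrow> R" where
  "der f p = (\<Sum>i\<in>{i. i \<ge> 1 \<and> (\<exists>m\<in>Poly_Mapping.keys p. i \<in> Poly_Mapping.keys m)}. fls_nth f (int i) * pd i p)"

definition S :: "int \<Rightarrow> R \<Rightarrow> R" where
  "S n = der (f_ser (1 - n))"

end

theory Submission
  imports Defs "HOL-Computational_Algebra.Polynomial"
begin

text \<open>The commutator of the derivations \<open>\<partial>\<^sub>f\<close> and \<open>\<partial>\<^sub>g\<close> of \<open>R\<close> is the derivation
  \<open>\<partial>\<^sub>h\<close> with \<open>h = \<partial>\<^sub>f g - \<partial>\<^sub>g f\<close> (\<open>\<partial>\<^sub>f\<close> acting coefficientwise on series), so it suffices to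
  show \<open>\<partial>\<^bsub>f\<^sub>a\<^esub> f\<^sub>b - \<partial>\<^bsub>f\<^sub>b\<^esub> f\<^sub>a = (a - b) f\<^bsub>a+b-1\<^esub>\<close>.
  Both sides contain only positive powers of \<open>\<lambda>\<close>. Modulo polynomials in \<open>\<phi>\<close> with constant
  coefficients, \<open>f\<^sub>a\<close> is \<open>\<lambda>\<^sup>a \<phi>\<^sub>\<lambda>\<close>, and \<open>\<partial>\<^sub>f \<phi> = f\<close> whenever \<open>f\<close> has only positive
  powers; the chain rule then shows that the difference of the two sides is such a polynomial.
  Since \<open>\<phi>\<^sup>k\<close> starts with \<open>\<lambda>\<^sup>-\<^sup>k\<close>, a polynomial in \<open>\<phi>\<close> without nonpositive powers of \<open>\<lambda>\<close>
  is zero.\<close>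

section \<open>Partial derivatives on the coefficient ring\<close>

abbreviation var_exp :: "nat \<Rightarrow> (nat \<Rightarrow>\<^sub>0 nat)" where
  "var_exp i \<equiv> Poly_Mapping.single i 1"

lemma poly_mapping_sum_monomials:
  "(p :: 'a \<Rightarrow>\<^sub>0 'b::comm_monoid_add) =
     (\<Sum>m\<in>Poly_Mapping.keys p. Poly_Mapping.single m (Poly_Mapping.lookup p m))"
  by (rule poly_mapping_eqI) (simp add: lookup_sum lookup_single when_def in_keys_iff)

lemma pd_eq_sum_superset:
  assumes "finite A" "Poly_Mapping.keys p \<subseteq> A"
  shows "pd i p = (\<Sum>m\<in>A. Poly_Mapping.single (m - var_exp i)
                     (Poly_Mapping.lookup p m * real (Poly_Mapping.lookup m i)))"
  unfolding pd_def by (rule sum.mono_neutral_left) (use assms in \<open>auto simp: in_keys_iff\<close>)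

lemma pd_single:
  "pd i (Poly_Mapping.single m a) = Poly_Mapping.single (m - var_exp i) (a * real (Poly_Mapping.lookup m i))"
  by (subst pd_eq_sum_superset[of "{m}"]) auto

lemma pd_zero [simp]: "pd i 0 = 0"
  by (simp add: pd_def)

lemma pd_add: "pd i (p + q) = pd i p + pd i q"
proof -
  let ?A = "Poly_Mapping.keys p \<union> Poly_Mapping.keys q"
  have "finite ?A" "Poly_Mapping.keys (p + q) \<subseteq> ?A"
    by (simp_all add: keys_add)
  then show ?thesis
    by (simp add: pd_eq_sum_superset[of ?A] lookup_add distrib_right single_add sum.distrib)
qed

lemma pd_sum: "pd i (sum f A) = (\<Sum>x\<in>A. pd i (f x))"
  by (induction A rule: infinite_finite_induct) (auto simp: pd_add)

lemma diff_var_exp_add: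
  "Poly_Mapping.lookup m i \<noteq> 0 \<Longrightarrow> m + m' - var_exp i = (m - var_exp i) + (m' :: nat \<Rightarrow>\<^sub>0 nat)"
  by (rule poly_mapping_eqI) (auto simp: lookup_add lookup_minus lookup_single when_def)

lemma pd_mult_single:
  "pd i (Poly_Mapping.single m a * Poly_Mapping.single m' b) =
     pd i (Poly_Mapping.single m a) * Poly_Mapping.single m' b
     + Poly_Mapping.single m a * pd i (Poly_Mapping.single m' b)"
proof -
  have left: "Poly_Mapping.single (m + m' - var_exp i) (a * b * real (Poly_Mapping.lookup m i)) =
      Poly_Mapping.single (m - var_exp i + m') (a * real (Poly_Mapping.lookup m i) * b)"
    using diff_var_exp_add[of m i m'] by (cases "Poly_Mapping.lookup m i = 0") (simp_all add: mult_ac)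
  have "Poly_Mapping.lookup m' i \<noteq> 0 \<Longrightarrow> m + m' - var_exp i = m + (m' - var_exp i)"
    using diff_var_exp_add[of m' i m] by (simp add: add.commute)
  then have right: "Poly_Mapping.single (m + m' - var_exp i) (a * b * real (Poly_Mapping.lookup m' i)) =
      Poly_Mapping.single (m + (m' - var_exp i)) (a * (b * real (Poly_Mapping.lookup m' i)))"
    by (cases "Poly_Mapping.lookup m' i = 0") (simp_all add: mult_ac)
  show ?thesis
    using left right by (simp add: mult_single pd_single lookup_add distrib_left single_add)
qed

lemma pd_mult: "pd i (p * q) = pd i p * q + p * pd i (q :: R)"
proof -
  define mono where "mono r m = Poly_Mapping.single m (Poly_Mapping.lookup r m)" for r :: R and m
  have expand: "r = (\<Sum>m\<in>Poly_Mapping.keys r. mono r m)" for r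
    unfolding mono_def by (rule poly_mapping_sum_monomials)
  have "pd i (p * q) = (\<Sum>m\<in>Poly_Mapping.keys p. \<Sum>m'\<in>Poly_Mapping.keys q.
                          pd i (mono p m) * mono q m' + mono p m * pd i (mono q m'))"
    by (subst (1 2) expand) (simp add: sum_product pd_sum mono_def pd_mult_single)
  also have "\<dots> = pd i (\<Sum>m\<in>Poly_Mapping.keys p. mono p m) * (\<Sum>m\<in>Poly_Mapping.keys q. mono q m)
       + (\<Sum>m\<in>Poly_Mapping.keys p. mono p m) * pd i (\<Sum>m\<in>Poly_Mapping.keys q. mono q m)"
    by (simp add: sum_product pd_sum sum.distrib)
  finally show ?thesis
    by (simp flip: expand)
qed

lemma pd_commute_single:
  "pd i (pd j (Poly_Mapping.single m a)) = pd j (pd i (Poly_Mapping.single m a))"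
proof (cases "i = j")
  case False
  then have "m - var_exp j - var_exp i = m - var_exp i - var_exp j"
    "Poly_Mapping.lookup (m - var_exp j) i = Poly_Mapping.lookup m i"
    "Poly_Mapping.lookup (m - var_exp i) j = Poly_Mapping.lookup m j"
    by (auto intro!: poly_mapping_eqI simp: lookup_minus lookup_single when_def)
  then show ?thesis
    by (simp add: pd_single ac_simps)
qed simp

lemma pd_commute: "pd i (pd j p) = pd j (pd i p)"
  by (subst (1 2) poly_mapping_sum_monomials) (simp add: pd_sum pd_commute_single)

lemma pd_var: "pd i (var j) = (if i = j then 1 else 0)"
  by (auto simp: var_def pd_single lookup_single)

section \<open>The derivations \<open>\<partial>\<^sub>f\<close>\<close>

definition der_vars :: "R \<Rightarrow> nat set" where
  "der_vars p = {i. i \<ge> 1 \<and> (\<exists>m\<in>Poly_Mapping.keys p. i \<in> Poly_Mapping.keys m)}"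

lemma finite_der_vars [simp]: "finite (der_vars p)"
  unfolding der_vars_def by auto

lemma der_eq_sum_der_vars: "der f p = (\<Sum>i\<in>der_vars p. fls_nth f (int i) * pd i p)"
  unfolding der_def der_vars_def ..

lemma pd_eq_0_if_notin_der_vars: "1 \<le> i \<Longrightarrow> i \<notin> der_vars p \<Longrightarrow> pd i p = 0"
  unfolding pd_def der_vars_def by (auto simp: in_keys_iff intro!: sum.neutral)

lemma der_eq_sum_superset:
  assumes "finite B" "\<And>i. i \<in> B \<Longrightarrow> 1 \<le> i" "\<And>i. 1 \<le> i \<Longrightarrow> i \<notin> B \<Longrightarrow> pd i q = 0"
  shows "der f q = (\<Sum>i\<in>B. fls_nth f (int i) * pd i q)"
proof -
  have "der f q = (\<Sum>i\<in>B \<union> der_vars q. fls_nth f (int i) * pd i q)"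
    unfolding der_eq_sum_der_vars
    by (rule sum.mono_neutral_left) (use assms in \<open>auto simp: pd_eq_0_if_notin_der_vars\<close>)
  also have "\<dots> = (\<Sum>i\<in>B. fls_nth f (int i) * pd i q)"
    by (rule sum.mono_neutral_right) (use assms in \<open>auto simp: der_vars_def\<close>)
  finally show ?thesis .
qed

lemma der_eq_sum_common_vars:
  "der f p = (\<Sum>i\<in>der_vars p \<union> der_vars q. fls_nth f (int i) * pd i p)"
  by (rule der_eq_sum_superset) (auto simp: der_vars_def pd_eq_0_if_notin_der_vars)

lemma der_add: "der f (p + q) = der f p + der f q"
proof -
  have "der f (p + q) = (\<Sum>i\<in>der_vars p \<union> der_vars q. fls_nth f (int i) * pd i (p + q))"
    by (rule der_eq_sum_superset) (auto simp: der_vars_def pd_add pd_eq_0_if_notin_der_vars)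
  then show ?thesis
    by (simp add: der_eq_sum_common_vars[of f p q] der_eq_sum_common_vars[of f q p]
        pd_add distrib_left sum.distrib Un_commute)
qed

lemma der_diff: "der f (p - q) = der f p - der f q"
  by (metis add_diff_cancel der_add diff_add_cancel)

lemma der_zero [simp]: "der f 0 = 0"
  by (simp add: der_def)

lemma der_sum: "der f (sum g A) = (\<Sum>x\<in>A. der f (g x))"
  by (induction A rule: infinite_finite_induct) (auto simp: der_add)

lemma der_mult: "der f (p * q) = der f p * q + p * der f q"
proof -
  have "der f (p * q) = (\<Sum>i\<in>der_vars p \<union> der_vars q. fls_nth f (int i) * pd i (p * q))"
    by (rule der_eq_sum_superset) (auto simp: der_vars_def pd_mult pd_eq_0_if_notin_der_vars)
  then show ?thesis
    by (simp add: der_eq_sum_common_vars[of f p q] der_eq_sum_common_vars[of f q p] pd_mult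
        distrib_left sum.distrib sum_distrib_left sum_distrib_right Un_commute ac_simps)
qed

lemma der_of_int [simp]: "der f (of_int k) = 0"
  by (simp add: der_def flip: single_of_int)

lemma der_one [simp]: "der f 1 = 0"
  using der_of_int[of f 1] by simp

lemma der_var: "1 \<le> k \<Longrightarrow> der f (var k) = fls_nth f (int k)"
  using der_eq_sum_superset[of "{k}" "var k" f] by (simp add: pd_var)

lemma der_of_int_left: "der (of_int k * f) p = of_int k * der f p"
  by (simp add: der_def fls_of_int sum_distrib_left mult.assoc)

section \<open>Commutators, and \<open>\<partial>\<^sub>f\<close> acting on Laurent series\<close>

definition der_fls :: "R fls \<Rightarrow> R fls \<Rightarrow> R fls" where
  "der_fls g F = Abs_fls (\<lambda>j. der g (fls_nth F j))"

lemma der_fls_nth [simp]: "fls_nth (der_fls g F) j = der g (fls_nth F j)"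
proof -
  obtain N where "\<forall>n<N. fls_nth F n = 0"
    by (elim fls_nth_vanishes_belowE)
  then have "\<forall>n<N. der g (fls_nth F n) = 0"
    by simp
  then show ?thesis
    unfolding der_fls_def by (rule nth_Abs_fls_lower_bound)
qed

lemma pd_der:
  "pd j (der g p) = (\<Sum>i\<in>der_vars p. pd j (fls_nth g (int i)) * pd i p + fls_nth g (int i) * pd j (pd i p))"
  by (simp add: der_eq_sum_der_vars pd_sum pd_mult)

lemma der_der:
  "der f (der g p) = (\<Sum>i\<in>der_vars p. der f (fls_nth g (int i)) * pd i p)
     + (\<Sum>j\<in>der_vars p. \<Sum>i\<in>der_vars p. fls_nth f (int j) * fls_nth g (int i) * pd j (pd i p))"
proof -
  define A where "A = der_vars p"
  define B where "B = A \<union> (\<Union>i\<in>A. der_vars (fls_nth g (int i)))"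
  have B: "finite B" "\<And>j. j \<in> B \<Longrightarrow> 1 \<le> j" "A \<subseteq> B"
    unfolding B_def A_def der_vars_def by auto
  have pd_pd_p: "pd j (pd i p) = 0" if "1 \<le> j" "j \<notin> A" for i j
    using that by (simp add: A_def pd_commute pd_eq_0_if_notin_der_vars)
  have pd_g: "pd j (fls_nth g (int i)) = 0" if "i \<in> A" "1 \<le> j" "j \<notin> B" for i j
    using that by (auto simp: B_def pd_eq_0_if_notin_der_vars)
  have der_g: "der f (fls_nth g (int i)) = (\<Sum>j\<in>B. fls_nth f (int j) * pd j (fls_nth g (int i)))"
    if "i \<in> A" for i
    by (rule der_eq_sum_superset) (use B pd_g[OF that] in auto)
  have "der f (der g p) = (\<Sum>j\<in>B. fls_nth f (int j) * pd j (der g p))"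
  proof (rule der_eq_sum_superset[OF B(1,2)])
    fix j :: nat
    assume j: "1 \<le> j" "j \<notin> B"
    with B(3) have "j \<notin> A" by auto
    with j show "pd j (der g p) = 0"
      by (simp add: pd_der pd_g pd_pd_p flip: A_def)
  qed
  also have "\<dots> = (\<Sum>j\<in>B. \<Sum>i\<in>A. fls_nth f (int j) * pd j (fls_nth g (int i)) * pd i p)
      + (\<Sum>j\<in>B. \<Sum>i\<in>A. fls_nth f (int j) * fls_nth g (int i) * pd j (pd i p))"
    by (simp add: pd_der sum_distrib_left distrib_left sum.distrib ac_simps flip: A_def)
  also have "(\<Sum>j\<in>B. \<Sum>i\<in>A. fls_nth f (int j) * pd j (fls_nth g (int i)) * pd i p)
      = (\<Sum>i\<in>A. der f (fls_nth g (int i)) * pd i p)"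
    by (subst sum.swap) (auto simp: der_g sum_distrib_right intro!: sum.cong)
  also have "(\<Sum>j\<in>B. \<Sum>i\<in>A. fls_nth f (int j) * fls_nth g (int i) * pd j (pd i p))
      = (\<Sum>j\<in>A. \<Sum>i\<in>A. fls_nth f (int j) * fls_nth g (int i) * pd j (pd i p))"
    by (rule sum.mono_neutral_right[OF B(1,3)]) (use B(2) pd_pd_p in auto)
  finally show ?thesis
    unfolding A_def .
qed

lemma der_commutator: "der f (der g p) - der g (der f p) = der (der_fls f g - der_fls g f) p"
proof -
  have "(\<Sum>j\<in>der_vars p. \<Sum>i\<in>der_vars p. fls_nth f (int j) * fls_nth g (int i) * pd j (pd i p))
      = (\<Sum>j\<in>der_vars p. \<Sum>i\<in>der_vars p. fls_nth g (int j) * fls_nth f (int i) * pd j (pd i p))"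
    by (subst sum.swap) (simp add: pd_commute ac_simps)
  then show ?thesis
    unfolding der_der der_eq_sum_der_vars[of "der_fls f g - der_fls g f"]
    by (simp add: left_diff_distrib sum_subtractf)
qed

lemma fls_times_nth_lower_bounds:
  fixes F G :: "'a::comm_ring_1 fls"
  assumes "\<And>k. k < a \<Longrightarrow> fls_nth F k = 0" "\<And>k. k < b \<Longrightarrow> fls_nth G k = 0"
  shows "fls_nth (F * G) n = (\<Sum>i\<in>{a..n - b}. fls_nth F i * fls_nth G (n - i))"
proof (cases "F = 0 \<or> G = 0")
  case False
  then have "a \<le> fls_subdegree F" "b \<le> fls_subdegree G"
    using assms by (auto intro: fls_subdegree_geI)
  then show ?thesis
    unfolding fls_times_nth(2) by (intro sum.mono_neutral_left) auto
qed auto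

lemma der_fls_add: "der_fls g (F + G) = der_fls g F + der_fls g G"
  by (rule fls_eqI) (simp add: der_add)

lemma der_fls_diff: "der_fls g (F - G) = der_fls g F - der_fls g G"
  by (rule fls_eqI) (simp add: der_diff)

lemma der_fls_const: "der_fls g (fls_const c) = fls_const (der g c)"
  by (rule fls_eqI) simp

lemma der_fls_X_intpow [simp]: "der_fls g (fls_X_intpow a) = 0"
  by (rule fls_eqI) simp

lemma der_fls_mult: "der_fls g (F * G) = der_fls g F * G + F * der_fls g G"
proof (rule fls_eqI)
  fix n
  let ?a = "fls_subdegree F" and ?b = "fls_subdegree G"
  have F: "\<And>k. k < ?a \<Longrightarrow> fls_nth F k = 0" and G: "\<And>k. k < ?b \<Longrightarrow> fls_nth G k = 0"
    and DF: "\<And>k. k < ?a \<Longrightarrow> fls_nth (der_fls g F) k = 0"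
    and DG: "\<And>k. k < ?b \<Longrightarrow> fls_nth (der_fls g G) k = 0"
    by auto
  show "fls_nth (der_fls g (F * G)) n = fls_nth (der_fls g F * G + F * der_fls g G) n"
    by (simp add: fls_times_nth_lower_bounds[OF F G] fls_times_nth_lower_bounds[OF DF G]
        fls_times_nth_lower_bounds[OF F DG] der_sum der_mult sum.distrib)
qed

lemma der_fls_deriv: "der_fls g (fls_deriv F) = fls_deriv (der_fls g F)"
  by (rule fls_eqI) (simp add: der_mult der_add)

definition only_pos_powers :: "'a::zero fls \<Rightarrow> bool" where
  "only_pos_powers F \<longleftrightarrow> (\<forall>j\<le>0. fls_nth F j = 0)"

lemma only_pos_powers_diff:
  "only_pos_powers F \<Longrightarrow> only_pos_powers G \<Longrightarrow> only_pos_powers (F - (G :: 'a::ab_group_add fls))"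
  by (simp add: only_pos_powers_def)

lemma only_pos_powers_of_int_mult:
  "only_pos_powers F \<Longrightarrow> only_pos_powers (of_int k * (F :: 'a::comm_ring_1 fls))"
  by (simp add: only_pos_powers_def fls_of_int)

lemma only_pos_powers_der_fls: "only_pos_powers F \<Longrightarrow> only_pos_powers (der_fls g F)"
  by (simp add: only_pos_powers_def)

section \<open>The series \<open>\<phi>\<close> and its powers\<close>

lemma phi_nth: "fls_nth phi j = (if j = -1 then 1 else if 1 \<le> j then var (nat j) else 0)"
  by (auto simp: phi_def)

lemma der_fls_phi: "only_pos_powers g \<Longrightarrow> der_fls g phi = g"
  by (rule fls_eqI) (auto simp: only_pos_powers_def phi_nth der_var)

lemma phi_subdegree: "fls_subdegree phi = -1"
  by (rule fls_subdegree_eqI) (auto simp: phi_nth)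

lemma wser_eq_right_inverse: "wser = fls_right_inverse phi 1"
proof -
  have phi_inv: "phi * fls_right_inverse phi 1 = 1"
    by (rule fls_right_inverse) (simp add: phi_subdegree phi_nth)
  show ?thesis
    unfolding wser_def
  proof (rule the_equality)
    show "fls_right_inverse phi 1 * phi = 1"
      using phi_inv by (simp add: mult.commute)
    show "w = fls_right_inverse phi 1" if "w * phi = 1" for w
    proof -
      have "w = w * (phi * fls_right_inverse phi 1)"
        by (simp only: phi_inv mult_1_right)
      also have "\<dots> = fls_right_inverse phi 1"
        by (simp only: that mult_1_left flip: mult.assoc)
      finally show ?thesis .
    qed
  qed
qed

lemma wser_subdegree: "fls_subdegree wser = 1"
  unfolding wser_eq_right_inverse using fls_lr_inverse_subdegree(2)[of 1 phi] by (simp add: phi_subdegree)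

lemma wser_nth_1: "fls_nth wser 1 = 1"
  unfolding wser_eq_right_inverse using fls_lr_inverse_base(2)[of phi 1] by (simp add: phi_subdegree)

lemma phipow_nth_below: "j < - k \<Longrightarrow> fls_nth (phipow k) j = 0"
  by (auto simp: phipow_def fls_pow_nth_below_subdegree phi_subdegree wser_subdegree)

lemma phipow_nth_lowest: "fls_nth (phipow k) (- k) = 1"
  using fls_pow_base[of phi "nat k"] fls_pow_base[of wser "nat (- k)"]
  by (auto simp: phipow_def phi_subdegree phi_nth wser_subdegree wser_nth_1)

text \<open>Since \<open>\<phi>\<^sup>k\<close> starts with \<open>\<lambda>\<^sup>-\<^sup>k\<close>, the coefficients of a combination \<open>\<Sum> d\<^sub>k \<phi>\<^sup>k\<close>
  are recovered one at a time from the top.\<close>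

lemma phipow_combination_eq_0:
  assumes top: "\<forall>k>N. d k = 0"
    and vanish: "\<And>j. j \<le> J \<Longrightarrow> (\<Sum>k\<in>{-j..N}. d k * fls_nth (phipow k) j) = 0"
    and "- J \<le> k"
  shows "d k = 0"
  using \<open>- J \<le> k\<close>
proof (induction "nat (N - k)" arbitrary: k rule: less_induct)
  case less
  show ?case
  proof (cases "k \<le> N")
    case True
    have above: "d k' = 0" if "k < k'" for k'
      using less that top by (cases "k' \<le> N") auto
    have "(\<Sum>k'\<in>{k..N}. d k' * fls_nth (phipow k') (- k)) = (\<Sum>k'\<in>{k}. d k' * fls_nth (phipow k') (- k))"
      by (rule sum.mono_neutral_right) (use True above in auto)
    then show ?thesis
      using vanish[of "- k"] less.prems by (simp add: phipow_nth_lowest)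
  qed (use top in auto)
qed

section \<open>Polynomials in \<open>\<phi>\<close> with constant coefficients\<close>

inductive_set phi_polys :: "R fls set" where
  const: "fls_const c \<in> phi_polys"
| phi: "phi \<in> phi_polys"
| add: "P \<in> phi_polys \<Longrightarrow> Q \<in> phi_polys \<Longrightarrow> P + Q \<in> phi_polys"
| mult: "P \<in> phi_polys \<Longrightarrow> Q \<in> phi_polys \<Longrightarrow> P * Q \<in> phi_polys"

lemma phi_polys_of_int: "of_int k \<in> phi_polys"
  by (simp add: fls_of_int phi_polys.const)

lemma phi_polys_0 [simp]: "0 \<in> phi_polys" and phi_polys_1 [simp]: "1 \<in> phi_polys"
  using phi_polys_of_int[of 0] phi_polys_of_int[of 1] by simp_all

lemma phi_polys_diff: "P \<in> phi_polys \<Longrightarrow> Q \<in> phi_polys \<Longrightarrow> P - Q \<in> phi_polys"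
  using phi_polys.add[OF _ phi_polys.mult[OF phi_polys_of_int[of "-1"]]] by simp

lemma phi_polys_pow: "P \<in> phi_polys \<Longrightarrow> P ^ k \<in> phi_polys"
  by (induction k) (auto intro: phi_polys.intros)

lemma phi_polys_sum: "(\<And>x. x \<in> A \<Longrightarrow> f x \<in> phi_polys) \<Longrightarrow> sum f A \<in> phi_polys"
  by (induction A rule: infinite_finite_induct) (auto intro: phi_polys.intros)

text \<open>The chain rule for \<open>P = p(\<phi>)\<close>: \<open>Q = p'(\<phi>)\<close>, and \<open>\<partial>\<^sub>g P - p'(\<phi>) \<partial>\<^sub>g \<phi>\<close> is \<open>p\<close> with
  \<open>\<partial>\<^sub>g\<close> applied to its coefficients, evaluated at \<open>\<phi>\<close>.\<close>

lemma phi_polys_chain_rule: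
  assumes "P \<in> phi_polys"
  obtains Q where "Q \<in> phi_polys" "fls_deriv P = Q * phi_lam"
    "\<And>g. der_fls g P - Q * der_fls g phi \<in> phi_polys"
proof -
  from assms have "\<exists>Q\<in>phi_polys. fls_deriv P = Q * phi_lam \<and> (\<forall>g. der_fls g P - Q * der_fls g phi \<in> phi_polys)"
  proof induction
    case (const c)
    show ?case
      by (intro bexI[of _ 0]) (auto simp: der_fls_const intro: phi_polys.const)
  next
    case phi
    show ?case
      by (intro bexI[of _ 1]) (auto simp: phi_lam_def)
  next
    case (add P1 P2)
    then obtain Q1 Q2 where Q1: "Q1 \<in> phi_polys" "fls_deriv P1 = Q1 * phi_lam"
        "\<forall>g. der_fls g P1 - Q1 * der_fls g phi \<in> phi_polys"
      and Q2: "Q2 \<in> phi_polys" "fls_deriv P2 = Q2 * phi_lam"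
        "\<forall>g. der_fls g P2 - Q2 * der_fls g phi \<in> phi_polys"
      by blast
    show ?case
    proof (intro bexI[of _ "Q1 + Q2"] conjI allI)
      fix g
      have "der_fls g (P1 + P2) - (Q1 + Q2) * der_fls g phi
          = (der_fls g P1 - Q1 * der_fls g phi) + (der_fls g P2 - Q2 * der_fls g phi)"
        by (simp add: der_fls_add algebra_simps)
      then show "der_fls g (P1 + P2) - (Q1 + Q2) * der_fls g phi \<in> phi_polys"
        using Q1 Q2 by (simp add: phi_polys.add)
    qed (use Q1 Q2 in \<open>auto simp: algebra_simps intro: phi_polys.add\<close>)
  next
    case (mult P1 P2)
    then obtain Q1 Q2 where Q1: "Q1 \<in> phi_polys" "fls_deriv P1 = Q1 * phi_lam"
        "\<forall>g. der_fls g P1 - Q1 * der_fls g phi \<in> phi_polys"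
      and Q2: "Q2 \<in> phi_polys" "fls_deriv P2 = Q2 * phi_lam"
        "\<forall>g. der_fls g P2 - Q2 * der_fls g phi \<in> phi_polys"
      by blast
    show ?case
    proof (intro bexI[of _ "Q1 * P2 + P1 * Q2"] conjI allI)
      fix g
      have "der_fls g (P1 * P2) - (Q1 * P2 + P1 * Q2) * der_fls g phi
          = (der_fls g P1 - Q1 * der_fls g phi) * P2 + P1 * (der_fls g P2 - Q2 * der_fls g phi)"
        by (simp add: der_fls_mult algebra_simps)
      then show "der_fls g (P1 * P2) - (Q1 * P2 + P1 * Q2) * der_fls g phi \<in> phi_polys"
        using Q1 Q2 mult.hyps by (simp add: phi_polys.add phi_polys.mult)
    qed (use Q1 Q2 mult.hyps in \<open>auto simp: algebra_simps intro: phi_polys.add phi_polys.mult\<close>)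
  qed
  then show ?thesis
    using that by blast
qed

lemma zero_in_range_fls_const [simp]: "0 \<in> range fls_const"
  by (metis fls_const_0 rangeI)

lemma add_in_range_fls_const:
  "a \<in> range fls_const \<Longrightarrow> b \<in> range fls_const \<Longrightarrow> a + b \<in> range fls_const"
  by (auto simp: fls_plus_const)

lemma mult_in_range_fls_const:
  "a \<in> range fls_const \<Longrightarrow> b \<in> range fls_const \<Longrightarrow> a * b \<in> range (fls_const :: 'a::comm_ring_1 \<Rightarrow> _)"
  by auto

lemma sum_in_range_fls_const:
  "(\<And>x. x \<in> A \<Longrightarrow> f x \<in> range fls_const) \<Longrightarrow> sum f A \<in> range fls_const"
proof (induction A rule: infinite_finite_induct)
  case (insert x A)
  then show ?case
    by (simp add: add_in_range_fls_const)
qed simp_all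

lemma phi_polys_poly_repr:
  assumes "P \<in> phi_polys"
  obtains p where "\<And>k. coeff p k \<in> range fls_const" "P = poly p phi"
proof -
  from assms have "\<exists>p. (\<forall>k. coeff p k \<in> range fls_const) \<and> P = poly p phi"
  proof induction
    case (const c)
    show ?case
      by (rule exI[of _ "[:fls_const c:]"]) (auto simp: coeff_pCons split: nat.split)
  next
    case phi
    show ?case
      by (rule exI[of _ "[:0, 1:]"]) (auto simp: coeff_pCons split: nat.split)
  next
    case (add P Q)
    then obtain p q where "\<forall>k. coeff p k \<in> range fls_const" "P = poly p phi"
      "\<forall>k. coeff q k \<in> range fls_const" "Q = poly q phi"
      by blast
    then show ?case
      by (intro exI[of _ "p + q"]) (simp add: add_in_range_fls_const)
  next
    case (mult P Q)
    then obtain p q where "\<forall>k. coeff p k \<in> range fls_const" "P = poly p phi"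
      "\<forall>k. coeff q k \<in> range fls_const" "Q = poly q phi"
      by blast
    then show ?case
      by (intro exI[of _ "p * q"]) (simp add: coeff_mult sum_in_range_fls_const mult_in_range_fls_const)
  qed
  then show ?thesis
    using that by blast
qed

lemma phi_polys_eq_0:
  assumes "P \<in> phi_polys" "only_pos_powers P"
  shows "P = 0"
proof -
  obtain p where p: "\<And>k. coeff p k \<in> range fls_const" "P = poly p phi"
    using phi_polys_poly_repr[OF assms(1)] by blast
  define c where "c k = (if 0 \<le> k then fls_nth (coeff p (nat k)) 0 else 0)" for k
  define N where "N = int (degree p)"
  have coeff_p: "coeff p i = fls_const (c (int i))" for i
    using p(1)[of i] by (auto simp: c_def)
  have "(\<Sum>k\<in>{-j..N}. c k * fls_nth (phipow k) j) = 0" if "j \<le> 0" for j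
  proof -
    have "fls_nth P j = (\<Sum>i\<le>degree p. c (int i) * fls_nth (phi ^ i) j)"
      by (simp add: p(2) poly_altdef fls_nth_sum coeff_p)
    also have "\<dots> = (\<Sum>k\<in>{0..N}. c k * fls_nth (phipow k) j)"
      by (rule sum.reindex_bij_witness[of _ nat int]) (auto simp: N_def phipow_def)
    also have "\<dots> = (\<Sum>k\<in>{-j..N}. c k * fls_nth (phipow k) j)"
      by (rule sum.mono_neutral_right) (use that in \<open>auto simp: phipow_nth_below\<close>)
    finally show ?thesis
      using assms(2) that by (simp add: only_pos_powers_def)
  qed
  moreover have "\<forall>k>N. c k = 0"
    by (auto simp: c_def N_def coeff_eq_0)
  ultimately have "c k = 0" if "0 \<le> k" for k
    using phipow_combination_eq_0[of N c 0 k] that by simp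
  then have "p = 0"
    by (intro poly_eqI) (simp add: coeff_p)
  then show ?thesis
    by (simp add: p(2))
qed

section \<open>Expansions in powers of \<open>\<phi>\<close>\<close>

text \<open>\<open>phi_coeff_rec F M t\<close> is the coefficient of \<open>\<phi>\<^bsup>M-t\<^esup>\<close>, determined by the coefficient
  of \<open>\<lambda>\<^bsup>t-M\<^esup>\<close> in \<open>F\<close> after subtracting the contributions of the higher powers.\<close>

function phi_coeff_rec :: "R fls \<Rightarrow> int \<Rightarrow> nat \<Rightarrow> R" where
  "phi_coeff_rec F M t = fls_nth F (int t - M)
     - (\<Sum>s\<in>{..<t}. phi_coeff_rec F M s * fls_nth (phipow (M - int s)) (int t - M))"
  by auto
termination
  by (relation "measure (\<lambda>(F, M, t). t)") auto

declare phi_coeff_rec.simps [simp del]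

lemma phi_expansion_exists: "\<exists>c. is_phi_expansion F c"
proof -
  define M where "M = - fls_subdegree F"
  define c where "c k = (if k \<le> M then phi_coeff_rec F M (nat (M - k)) else 0)" for k
  have "fls_nth F j = (\<Sum>k\<in>{-j..M}. c k * fls_nth (phipow k) j)" for j
  proof (cases "j < - M")
    case False
    define t where "t = nat (j + M)"
    have tj: "int t - M = j"
      using False by (simp add: t_def)
    have "(\<Sum>k\<in>{-j..M}. c k * fls_nth (phipow k) j)
        = (\<Sum>s\<in>{..t}. phi_coeff_rec F M s * fls_nth (phipow (M - int s)) j)"
      by (rule sum.reindex_bij_witness[of _ "\<lambda>s. M - int s" "\<lambda>k. nat (M - k)"])
        (use tj in \<open>auto simp: c_def\<close>)
    also have "\<dots> = fls_nth F j"
      using phipow_nth_lowest[of "M - int t"] tj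
      by (simp add: lessThan_Suc_atMost[symmetric] phi_coeff_rec.simps[of F M t])
    finally show ?thesis ..
  qed (simp add: M_def)
  then have "is_phi_expansion F c"
    unfolding is_phi_expansion_def by (intro exI[of _ M]) (simp add: c_def)
  then show ?thesis
    by blast
qed

lemma phi_expansion_unique:
  assumes "is_phi_expansion F c" "is_phi_expansion F c'"
  shows "c = c'"
proof
  fix k
  obtain M M' where M: "\<forall>k>M. c k = 0" "\<forall>j. fls_nth F j = (\<Sum>k\<in>{-j..M}. c k * fls_nth (phipow k) j)"
    and M': "\<forall>k>M'. c' k = 0" "\<forall>j. fls_nth F j = (\<Sum>k\<in>{-j..M'}. c' k * fls_nth (phipow k) j)"
    using assms unfolding is_phi_expansion_def by blast
  define N where "N = max M M'"
  have "(\<Sum>k\<in>{-j..N}. c k * fls_nth (phipow k) j) = fls_nth F j" for j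
    unfolding M(2)[rule_format] by (rule sum.mono_neutral_right) (use M(1) in \<open>auto simp: N_def\<close>)
  moreover have "(\<Sum>k\<in>{-j..N}. c' k * fls_nth (phipow k) j) = fls_nth F j" for j
    unfolding M'(2)[rule_format] by (rule sum.mono_neutral_right) (use M'(1) in \<open>auto simp: N_def\<close>)
  ultimately have "(\<Sum>k\<in>{-j..N}. (c k - c' k) * fls_nth (phipow k) j) = 0" for j
    by (simp add: left_diff_distrib sum_subtractf)
  moreover have "\<forall>k>N. c k - c' k = 0"
    using M(1) M'(1) by (simp add: N_def)
  ultimately have "c k - c' k = 0"
    using phipow_combination_eq_0[of N "\<lambda>k. c k - c' k" "- k" k] by simp
  then show "c k = c' k"
    by simp
qed

lemma is_phi_expansion_phi_coeff: "is_phi_expansion F (phi_coeff F)"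
  unfolding phi_coeff_def
  using phi_expansion_exists[of F] phi_expansion_unique[of F] by (metis theI)

lemma P_phi_eq_sum:
  assumes "\<forall>k>M. phi_coeff F k = 0"
  shows "P_phi F = (\<Sum>k\<in>{0..M}. fls_const (phi_coeff F k) * phipow k)"
  unfolding P_phi_def by (rule sum.mono_neutral_left) (use assms leI in fastforce)+

lemma P_phi_in_phi_polys: "P_phi F \<in> phi_polys"
proof -
  obtain M where M: "\<forall>k>M. phi_coeff F k = 0"
    using is_phi_expansion_phi_coeff[of F] unfolding is_phi_expansion_def by blast
  show ?thesis
    unfolding P_phi_eq_sum[OF M]
    by (intro phi_polys_sum) (auto simp: phipow_def intro: phi_polys.intros phi_polys_pow)
qed

lemma only_pos_powers_frakP_phi: "only_pos_powers (frakP_phi F)"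
  unfolding only_pos_powers_def
proof (intro allI impI)
  fix j :: int
  assume "j \<le> 0"
  obtain M where M: "\<forall>k>M. phi_coeff F k = 0"
    "\<forall>j. fls_nth F j = (\<Sum>k\<in>{-j..M}. phi_coeff F k * fls_nth (phipow k) j)"
    using is_phi_expansion_phi_coeff[of F] unfolding is_phi_expansion_def by blast
  have "fls_nth (P_phi F) j = (\<Sum>k\<in>{0..M}. phi_coeff F k * fls_nth (phipow k) j)"
    by (simp add: P_phi_eq_sum[OF M(1)] fls_nth_sum)
  also have "\<dots> = fls_nth F j"
    unfolding M(2)[rule_format] by (rule sum.mono_neutral_right) (use \<open>j \<le> 0\<close> in \<open>auto simp: phipow_nth_below\<close>)
  finally show "fls_nth (frakP_phi F) j = 0"
    by (simp add: frakP_phi_def)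
qed

section \<open>The Witt relations for the series \<open>f\<^sub>n\<close>\<close>

lemma only_pos_powers_f_ser: "only_pos_powers (f_ser a)"
  unfolding f_ser_def by (rule only_pos_powers_frakP_phi)

lemma f_ser_decomposition:
  obtains P Q where "P \<in> phi_polys" "Q \<in> phi_polys" "f_ser a = fls_X_intpow a * phi_lam - P"
    "fls_deriv P = Q * phi_lam" "\<And>g. der_fls g P - Q * der_fls g phi \<in> phi_polys"
proof -
  have "f_ser a = fls_X_intpow a * phi_lam - P_phi (fls_X_intpow a * phi_lam)"
    by (simp add: f_ser_def frakP_phi_def)
  with P_phi_in_phi_polys phi_polys_chain_rule that show ?thesis
    by metis
qed

lemma fls_X_intpow_deriv_commutator:
  fixes F :: "'a::comm_ring_1 fls"
  shows "fls_X_intpow b * fls_deriv (fls_X_intpow a * F) - fls_X_intpow a * fls_deriv (fls_X_intpow b * F)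
    = of_int (a - b) * (fls_X_intpow (a + b - 1) * F)"
proof -
  have expand: "fls_X_intpow b * fls_deriv (fls_X_intpow a * F)
      = fls_X_intpow (a + b) * fls_deriv F + of_int a * (fls_X_intpow (a + b - 1) * F)" for a b
  proof -
    have "fls_X_intpow b * fls_deriv (fls_X_intpow a * F)
        = (fls_X_intpow b * fls_X_intpow a) * fls_deriv F
          + of_int a * ((fls_X_intpow b * fls_X_intpow (a - 1)) * F)"
      by (simp add: fls_deriv_X_intpow algebra_simps)
    then show ?thesis
      by (simp only: fls_X_intpow_times_fls_X_intpow) (simp add: algebra_simps)
  qed
  show ?thesis
    unfolding expand by (simp add: add.commute[of b a] algebra_simps)
qed

text \<open>The terms \<open>Qa * f_ser b + Qb * f_ser a\<close> are symmetric in \<open>a\<close> and \<open>b\<close>, so they cancel in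
  the commutator.\<close>

lemma der_fls_f_ser_mod_phi_polys:
  assumes Pa: "f_ser a = fls_X_intpow a * phi_lam - Pa" "fls_deriv Pa = Qa * phi_lam" "Qa \<in> phi_polys"
    and Pb: "Pb \<in> phi_polys" "f_ser b = fls_X_intpow b * phi_lam - Pb"
      "\<And>g. der_fls g Pb - Qb * der_fls g phi \<in> phi_polys"
  shows "der_fls (f_ser a) (f_ser b)
    - (fls_X_intpow b * fls_deriv (fls_X_intpow a * phi_lam) - Qa * f_ser b - Qb * f_ser a) \<in> phi_polys"
proof -
  have phi: "der_fls (f_ser a) phi = f_ser a"
    by (rule der_fls_phi[OF only_pos_powers_f_ser])
  have "der_fls (f_ser a) (f_ser b) = fls_X_intpow b * fls_deriv (f_ser a) - der_fls (f_ser a) Pb"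
    by (simp add: Pb(2) der_fls_diff der_fls_mult phi_lam_def der_fls_deriv phi)
  also have "\<dots> = fls_X_intpow b * fls_deriv (fls_X_intpow a * phi_lam) - Qa * (f_ser b + Pb)
      - der_fls (f_ser a) Pb"
    by (simp add: Pa Pb(2) algebra_simps)
  finally have "der_fls (f_ser a) (f_ser b)
      - (fls_X_intpow b * fls_deriv (fls_X_intpow a * phi_lam) - Qa * f_ser b - Qb * f_ser a)
      = - (Qa * Pb) - (der_fls (f_ser a) Pb - Qb * der_fls (f_ser a) phi)"
    by (simp add: phi algebra_simps)
  also have "\<dots> \<in> phi_polys"
    using assms by (simp add: phi_polys_diff phi_polys.mult flip: diff_0)
  finally show ?thesis .
qed

lemma der_fls_f_ser_commutator:
  "der_fls (f_ser a) (f_ser b) - der_fls (f_ser b) (f_ser a) = of_int (a - b) * f_ser (a + b - 1)"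
proof -
  obtain Pa Qa where Pa: "Pa \<in> phi_polys" "Qa \<in> phi_polys" "f_ser a = fls_X_intpow a * phi_lam - Pa"
    "fls_deriv Pa = Qa * phi_lam" "\<And>g. der_fls g Pa - Qa * der_fls g phi \<in> phi_polys"
    using f_ser_decomposition[of a] by metis
  obtain Pb Qb where Pb: "Pb \<in> phi_polys" "Qb \<in> phi_polys" "f_ser b = fls_X_intpow b * phi_lam - Pb"
    "fls_deriv Pb = Qb * phi_lam" "\<And>g. der_fls g Pb - Qb * der_fls g phi \<in> phi_polys"
    using f_ser_decomposition[of b] by metis
  obtain Pc where Pc: "Pc \<in> phi_polys" "f_ser (a + b - 1) = fls_X_intpow (a + b - 1) * phi_lam - Pc"
    using f_ser_decomposition[of "a + b - 1"] by metis
  define D where "D = der_fls (f_ser a) (f_ser b) - der_fls (f_ser b) (f_ser a) - of_int (a - b) * f_ser (a + b - 1)"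
  have "D = (der_fls (f_ser a) (f_ser b)
        - (fls_X_intpow b * fls_deriv (fls_X_intpow a * phi_lam) - Qa * f_ser b - Qb * f_ser a))
      - (der_fls (f_ser b) (f_ser a)
        - (fls_X_intpow a * fls_deriv (fls_X_intpow b * phi_lam) - Qb * f_ser a - Qa * f_ser b))
      + of_int (a - b) * Pc"
    using fls_X_intpow_deriv_commutator[of b a phi_lam] by (simp add: D_def Pc(2) algebra_simps)
  also have "\<dots> \<in> phi_polys"
    by (rule phi_polys.add[OF phi_polys_diff phi_polys.mult[OF phi_polys_of_int Pc(1)]])
      (rule der_fls_f_ser_mod_phi_polys[OF Pa(3,4,2) Pb(1,3,5)]
        der_fls_f_ser_mod_phi_polys[OF Pb(3,4,2) Pa(1,3,5)])+
  finally have "D \<in> phi_polys" .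
  moreover have "only_pos_powers D"
    unfolding D_def
    by (intro only_pos_powers_diff only_pos_powers_der_fls only_pos_powers_of_int_mult only_pos_powers_f_ser)
  ultimately have "D = 0"
    by (rule phi_polys_eq_0)
  then show ?thesis
    by (simp add: D_def)
qed

theorem mainTheorem1:
  fixes n m :: int and p :: R
  assumes "in_R p"
  shows "S n (S m p) - S m (S n p) = of_int (m - n) * S (n + m) p"
proof -
  have "S n (S m p) - S m (S n p)
      = der (der_fls (f_ser (1 - n)) (f_ser (1 - m)) - der_fls (f_ser (1 - m)) (f_ser (1 - n))) p"
    unfolding S_def by (rule der_commutator)
  also have "\<dots> = der (of_int (m - n) * f_ser (1 - (n + m))) p"
  proof -
    have "(1 - n) - (1 - m) = m - n" "(1 - n) + (1 - m) - 1 = 1 - (n + m)"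
      by simp_all
    then show ?thesis
      using der_fls_f_ser_commutator[of "1 - n" "1 - m"] by (simp only:)
  qed
  also have "\<dots> = of_int (m - n) * S (n + m) p"
    unfolding S_def by (rule der_of_int_left)
  finally show ?thesis .
qed

end
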